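(* Let $n\geq 1$ and $m\geq 1$ be integers. Then \[\frac{1}{n!}\sum_{\pi\in S_n}|{\bf B}^{-1}({\bf B}(\pi))|^m=\prod_{j=1}^{n-1}\frac{2^{m+1}+n-j-1}{n-j+1}.\]
   Context: $S_n$ is the set of permutations of $\{1,\dots,n\}$ written as words $\pi_1\cdots\pi_n$. For $i\in\{1,\dots,n-1\}$, $t_i(\pi)$ swaps $\pi_i$ and $\pi_{i+1}$ if $\pi_i>\pi_{i+1}$ and leaves $\pi$ unchanged otherwise. The bubble sort map is ${\bf B}=t_{n-1}\circ\cdots\circ t_1:S_n\to S_n$, and ${\bf B}^{-1}(\sigma)=\{\tau\in S_n:{\bf B}(\tau)=\sigma\}$. *)

theory Defs
  imports Main "HOL-Combinatorics.Multiset_Permutations"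
begin

text \<open>List positions are 0-based, so the
  paper's t_i (for 1 <= i <= n-1) is swap_step (i-1) below.\<close>

definition swap_step :: "nat \<Rightarrow> nat list \<Rightarrow> nat list" where
  "swap_step i w =
     (if w ! i > w ! (Suc i) then w[i := w ! Suc i, Suc i := w ! i] else w)"

text \<open>Bubble sort map B = t_{n-1} o ... o t_1 : t_1 is applied first.\<close>
definition bubble :: "nat list \<Rightarrow> nat list" where
  "bubble w = foldl (\<lambda>v i. swap_step i v) w [0..<length w - 1]"

definition bubble_preimage :: "nat \<Rightarrow> nat list \<Rightarrow> nat list set" where
  "bubble_preimage n s = {t \<in> permutations_of_set {1..n}. bubble t = s}"

end

theory Submission
  imports Defs
begin

(*
  A pass of bubble sort carries the running maximum to the right, so it is a function of
  the word with recursion B(a b w) = b B(a w) if b < a and a B(b w) otherwise, and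
  B(pi) always ends with the largest letter.  If every letter of g is smaller than M,
  the preimages of g M are exactly the words a M b with B(a) = g_1 ... g_k and
  b = g_(k+1) ... g_l, so |B^-1(g M)| is the sum over k of |B^-1(g_1 ... g_k)|.
  Appending a letter x to g therefore doubles |B^-1(g M)| when x is a new left-to-right
  maximum and leaves it unchanged otherwise, whence |B^-1(g n)| = 2^lrmax(g).
  Grouping the permutations pi by their image B(pi) = g n turns the left-hand side into
  the sum of (2^(m+1))^lrmax(g) over g in S_(n-1), and the classical generating function
  sum_g x^lrmax(g) = x (x+1) ... (x+n-2) gives the product.
*)

lemma bubble_Nil [simp]: "bubble [] = []"
  by (simp add: bubble_def)

lemma bubble_singleton [simp]: "bubble [a] = [a]"
  by (simp add: bubble_def)

lemma foldl_swap_step_Cons: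
  "foldl (\<lambda>v i. swap_step i v) (x # v) (map Suc is) = x # foldl (\<lambda>v i. swap_step i v) v is"
  by (induction "is" arbitrary: v) (simp_all add: swap_step_def)

lemma bubble_Cons_Cons [simp]:
  "bubble (a # b # w) = (if b < a then b # bubble (a # w) else a # bubble (b # w))"
proof -
  have "[0..<length (a # b # w) - 1] = 0 # map Suc [0..<length (a # w) - 1]"
    by (simp add: map_Suc_upt upt_conv_Cons del: upt_Suc)
  moreover have "swap_step 0 (a # b # w) = (if b < a then b # a # w else a # b # w)"
    by (simp add: swap_step_def)
  ultimately show ?thesis
    by (simp add: bubble_def foldl_swap_step_Cons del: upt_Suc)
qed

lemma mset_bubble [simp]: "mset (bubble w) = mset w"
proof (cases w)
  case (Cons a v)
  have "mset (bubble (a # v)) = mset (a # v)"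
    by (induction v arbitrary: a) auto
  with Cons show ?thesis by simp
qed simp

lemma set_bubble [simp]: "set (bubble w) = set w"
  by (metis mset_bubble set_mset_mset)

lemma length_bubble [simp]: "length (bubble w) = length w"
  by (metis mset_bubble size_mset)

lemma distinct_bubble [simp]: "distinct (bubble w) = distinct w"
  by (rule mset_eq_imp_distinct_iff[OF mset_bubble])

lemma bubble_in_permutations_of_set_iff [simp]:
  "bubble t \<in> permutations_of_set A \<longleftrightarrow> t \<in> permutations_of_set A"
  by (simp add: permutations_of_set_def)

lemma bubble_Cons_max: "\<forall>x\<in>set w. x < M \<Longrightarrow> bubble (M # w) = w @ [M]"
  by (induction w) auto

lemma bubble_append_max:
  assumes "\<forall>x\<in>set a. x < M" and "\<forall>x\<in>set b. x < M"
  shows "bubble (a @ M # b) = bubble a @ b @ [M]"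
proof (cases a)
  case (Cons c v)
  have "c < M \<Longrightarrow> \<forall>x\<in>set v. x < M \<Longrightarrow> bubble (c # v @ M # b) = bubble (c # v) @ b @ [M]"
    by (induction v arbitrary: c) (auto simp: bubble_Cons_max assms(2))
  with Cons assms(1) show ?thesis by simp
qed (simp add: bubble_Cons_max assms(2))

lemma le_last_bubble: "x \<in> set w \<Longrightarrow> x \<le> last (bubble w)"
proof (cases w)
  case (Cons a v)
  have "\<forall>x\<in>set (a # v). x \<le> last (bubble (a # v))"
  proof (induction v arbitrary: a)
    case (Cons b v)
    have "last (bubble (a # b # v)) = last (bubble (max a b # v))"
      by (cases v) (auto simp: max_def)
    then show ?case
      using Cons.IH[of "max a b"] by (auto simp: max_def split: if_splits)
  qed simp
  with Cons show "x \<in> set w \<Longrightarrow> x \<le> last (bubble w)" by auto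
qed simp

lemma last_bubble:
  assumes "w \<noteq> []"
  shows "last (bubble w) = Max (set w)"
proof (rule Max_eqI[symmetric])
  have "bubble w \<noteq> []"
    using assms by (metis length_0_conv length_bubble)
  then show "last (bubble w) \<in> set w"
    using last_in_set set_bubble by metis
qed (simp_all add: le_last_bubble)

lemma bubble_vimage_Nil: "bubble -` {[]} = {[]}"
  by (auto simp flip: length_0_conv)

lemma finite_bubble_vimage: "finite (bubble -` {s})"
proof (rule finite_subset)
  show "bubble -` {s} \<subseteq> {t. set t \<subseteq> set s \<and> length t = length s}"
    by auto
  show "finite {t. set t \<subseteq> set s \<and> length t = length s}"
    by (rule finite_lists_length_eq) simp
qed

lemma bubble_vimage_snoc_max:
  assumes "\<forall>x\<in>set g. x < M"
  shows "bubble -` {g @ [M]} = (\<Union>k\<le>length g. (\<lambda>a. a @ M # drop k g) ` bubble -` {take k g})"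
proof (intro equalityI subsetI)
  fix t assume "t \<in> bubble -` {g @ [M]}"
  then have bt: "bubble t = g @ [M]" by simp
  then have "M \<in> set t" by (metis set_bubble in_set_conv_decomp)
  then obtain a b where t: "t = a @ M # b" by (meson split_list)
  have "mset (a @ M # b) = mset (g @ [M])" using bt t by (metis mset_bubble)
  then have "mset (a @ b) = mset g" by simp
  then have "set (a @ b) = set g" by (metis set_mset_mset)
  with assms have "\<forall>x\<in>set a. x < M" "\<forall>x\<in>set b. x < M" by auto
  with bt t have "bubble a @ b = g" by (simp add: bubble_append_max)
  with t show "t \<in> (\<Union>k\<le>length g. (\<lambda>a. a @ M # drop k g) ` bubble -` {take k g})"
    by (intro UN_I[of "length a"]) auto
next
  fix t assume "t \<in> (\<Union>k\<le>length g. (\<lambda>a. a @ M # drop k g) ` bubble -` {take k g})"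
  then obtain k a where a: "bubble a = take k g" and t: "t = a @ M # drop k g" by auto
  then have "set a \<subseteq> set g" by (metis set_bubble set_take_subset)
  with assms have "bubble (a @ M # drop k g) = bubble a @ drop k g @ [M]"
    by (intro bubble_append_max) (auto dest: in_set_dropD)
  with a t show "t \<in> bubble -` {g @ [M]}"
    by (metis append_assoc append_take_drop_id vimage_singleton_eq)
qed

lemma card_bubble_vimage_snoc_max:
  assumes "\<forall>x\<in>set g. x < M"
  shows "card (bubble -` {g @ [M]}) = (\<Sum>k\<le>length g. card (bubble -` {take k g}))"
proof -
  have disjoint: "(\<lambda>a. a @ M # drop i g) ` bubble -` {take i g}
      \<inter> (\<lambda>a. a @ M # drop j g) ` bubble -` {take j g} = {}"
    if "i \<le> length g" "j \<le> length g" "i \<noteq> j" for i j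
  proof -
    have "a = a'" if "bubble a = take i g" "bubble a' = take j g"
      and "a @ M # drop i g = a' @ M # drop j g" for a a'
    proof -
      have "M \<notin> set a" "M \<notin> set (drop i g)"
        using that(1) assms by (metis set_bubble in_set_takeD in_set_dropD less_irrefl)+
      with that(3) show ?thesis by (simp add: append_Cons_eq_iff)
    qed
    moreover have "length a = i" if "bubble a = take i g" for a
      using that \<open>i \<le> length g\<close> by (metis length_bubble length_take min_absorb2)
    moreover have "length a = j" if "bubble a = take j g" for a
      using that \<open>j \<le> length g\<close> by (metis length_bubble length_take min_absorb2)
    ultimately show ?thesis using \<open>i \<noteq> j\<close> by blast
  qed
  have "inj_on (\<lambda>a. a @ M # drop k g) A" for k A
    by (rule inj_onI) simp
  then show ?thesis
    unfolding bubble_vimage_snoc_max[OF assms]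
    by (subst card_UN_disjoint) (auto simp: finite_bubble_vimage card_image disjoint)
qed

lemma bubble_vimage_snoc_eq_empty:
  assumes "y \<in> set g" and "x < y"
  shows "bubble -` {g @ [x]} = {}"
proof -
  have False if "bubble t = g @ [x]" for t
  proof -
    have "t \<noteq> []" using that by auto
    then have "x = Max (set (g @ [x]))"
      using that last_bubble by (metis last_snoc set_bubble)
    moreover have "y \<le> Max (set (g @ [x]))" using assms(1) by simp
    ultimately show False using assms(2) by simp
  qed
  then show ?thesis by blast
qed

definition ltr_maxima :: "'a::linorder list \<Rightarrow> nat" where
  "ltr_maxima xs = length (filter (\<lambda>k. \<forall>y\<in>set (take k xs). y < xs ! k) [0..<length xs])"

lemma ltr_maxima_Nil [simp]: "ltr_maxima [] = 0"
  by (simp add: ltr_maxima_def)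

lemma ltr_maxima_snoc:
  "ltr_maxima (xs @ [x]) = ltr_maxima xs + (if \<forall>y\<in>set xs. y < x then 1 else 0)"
proof -
  have "filter (\<lambda>k. \<forall>y\<in>set (take k (xs @ [x])). y < (xs @ [x]) ! k) [0..<length xs]
      = filter (\<lambda>k. \<forall>y\<in>set (take k xs). y < xs ! k) [0..<length xs]"
    by (rule filter_cong) (simp_all add: nth_append)
  then show ?thesis by (simp add: ltr_maxima_def)
qed

lemma card_bubble_vimage_snoc_max_eq:
  assumes "distinct g" and "\<forall>x\<in>set g. x < M"
  shows "card (bubble -` {g @ [M]}) = 2 ^ ltr_maxima g"
  using assms
proof (induction g arbitrary: M rule: rev_induct)
  case Nil
  then show ?case
    using card_bubble_vimage_snoc_max[of "[]"] by (simp add: bubble_vimage_Nil)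
next
  case (snoc x g)
  have "card (bubble -` {(g @ [x]) @ [M]})
      = card (bubble -` {g @ [M]}) + card (bubble -` {g @ [x]})"
    using snoc.prems card_bubble_vimage_snoc_max[of "g @ [x]" M]
      card_bubble_vimage_snoc_max[of g M] by simp
  also have "card (bubble -` {g @ [M]}) = 2 ^ ltr_maxima g"
    using snoc by simp
  also have "card (bubble -` {g @ [x]}) = (if \<forall>y\<in>set g. y < x then 2 ^ ltr_maxima g else 0)"
  proof (cases "\<forall>y\<in>set g. y < x")
    case False
    then obtain y where "y \<in> set g" and "\<not> y < x" by blast
    moreover have "x \<notin> set g" using snoc.prems(1) by simp
    ultimately have "x < y" by (metis le_neq_implies_less not_less)
    with \<open>y \<in> set g\<close> False show ?thesis by (simp add: bubble_vimage_snoc_eq_empty)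
  qed (use snoc in simp)
  finally show ?case by (simp add: ltr_maxima_snoc)
qed

lemma bubble_image_permutations_of_set:
  fixes A :: "nat set"
  assumes "finite A" and "A \<noteq> {}"
  shows "bubble ` permutations_of_set A = (\<lambda>g. g @ [Max A]) ` permutations_of_set (A - {Max A})"
proof (intro equalityI subsetI)
  fix s assume "s \<in> bubble ` permutations_of_set A"
  then obtain p where p: "p \<in> permutations_of_set A" and s: "s = bubble p" by blast
  then have "s \<in> permutations_of_set A" by simp
  then have set_s: "set s = A" and "distinct s" by (auto simp: permutations_of_set_def)
  with assms(2) have "s \<noteq> []" by auto
  then obtain g x where g: "s = g @ [x]" by (cases s rule: rev_cases) auto
  have "p \<noteq> []" using \<open>s \<noteq> []\<close> s by auto
  then have "last s = Max A"
    using last_bubble[of p] s set_s by simp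
  then have "x = Max A"
    using g by simp
  with set_s \<open>distinct s\<close> g have "g \<in> permutations_of_set (A - {Max A})"
    by (auto simp: permutations_of_set_def)
  with g \<open>x = Max A\<close> show "s \<in> (\<lambda>g. g @ [Max A]) ` permutations_of_set (A - {Max A})"
    by blast
next
  fix s assume "s \<in> (\<lambda>g. g @ [Max A]) ` permutations_of_set (A - {Max A})"
  then obtain g where g: "g \<in> permutations_of_set (A - {Max A})" and s: "s = g @ [Max A]"
    by blast
  have "\<forall>x\<in>set g. x < Max A"
  proof
    fix x assume "x \<in> set g"
    then have "x \<in> A" and "x \<noteq> Max A"
      using g by (auto simp: permutations_of_set_def)
    then show "x < Max A"
      using Max_ge[OF assms(1)] by (simp add: order.not_eq_order_implies_strict)
  qed
  then have "s = bubble (Max A # g)"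
    using s by (simp add: bubble_Cons_max)
  moreover have "Max A # g \<in> permutations_of_set A"
  proof -
    have "Max A \<in> A" using assms by simp
    then have "insert (Max A) (A - {Max A}) = A" by blast
    then show ?thesis using g by (simp add: permutations_of_set_def)
  qed
  ultimately show "s \<in> bubble ` permutations_of_set A" by blast
qed

lemma sum_card_fiber_power:
  assumes "finite P"
  shows "(\<Sum>p\<in>P. of_nat (card {t \<in> P. f t = f p}) ^ m :: 'b::comm_semiring_1)
       = (\<Sum>y\<in>f ` P. of_nat (card {t \<in> P. f t = y}) ^ Suc m)"
proof -
  have "(\<Sum>p\<in>P. of_nat (card {t \<in> P. f t = f p}) ^ m :: 'b)
      = (\<Sum>y\<in>f ` P. \<Sum>p\<in>{t \<in> P. f t = y}. of_nat (card {t \<in> P. f t = f p}) ^ m)"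
    using assms by (rule sum.image_gen)
  also have "\<dots> = (\<Sum>y\<in>f ` P. of_nat (card {t \<in> P. f t = y}) ^ Suc m)"
    by (rule sum.cong) simp_all
  finally show ?thesis .
qed

lemma permutations_of_set_nonempty_snoc:
  assumes "A \<noteq> {}"
  shows "permutations_of_set A = (\<Union>x\<in>A. (\<lambda>g. g @ [x]) ` permutations_of_set (A - {x}))"
proof -
  have "permutations_of_set A = rev ` permutations_of_set A"
    by simp
  also have "\<dots> = (\<Union>x\<in>A. (\<lambda>g. rev g @ [x]) ` permutations_of_set (A - {x}))"
    by (simp add: permutations_of_set_nonempty[OF assms] image_UN image_image)
  also have "\<dots> = (\<Union>x\<in>A. (\<lambda>g. g @ [x]) ` permutations_of_set (A - {x}))"
  proof (rule SUP_cong)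
    fix x
    show "(\<lambda>g. rev g @ [x]) ` permutations_of_set (A - {x})
        = (\<lambda>g. g @ [x]) ` permutations_of_set (A - {x})"
      using image_image[of "\<lambda>g. g @ [x]" rev "permutations_of_set (A - {x})"] by simp
  qed simp
  finally show ?thesis .
qed

lemma sum_permutations_of_set_snoc:
  assumes "finite A" and "A \<noteq> {}"
  shows "(\<Sum>g\<in>permutations_of_set A. h g)
       = (\<Sum>x\<in>A. \<Sum>g\<in>permutations_of_set (A - {x}). h (g @ [x]))"
proof -
  have "(\<Sum>g\<in>permutations_of_set A. h g)
      = (\<Sum>x\<in>A. \<Sum>g\<in>(\<lambda>g. g @ [x]) ` permutations_of_set (A - {x}). h g)"
    unfolding permutations_of_set_nonempty_snoc[OF assms(2)]
    using assms(1) by (rule sum.UNION_disjoint) auto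
  also have "\<dots> = (\<Sum>x\<in>A. \<Sum>g\<in>permutations_of_set (A - {x}). h (g @ [x]))"
    by (simp add: sum.reindex inj_on_def)
  finally show ?thesis .
qed

lemma sum_power_ltr_maxima:
  fixes A :: "'a::linorder set" and x :: "'b::comm_semiring_1"
  assumes "finite A"
  shows "(\<Sum>g\<in>permutations_of_set A. x ^ ltr_maxima g) = pochhammer x (card A)"
  using assms
proof (induction "card A" arbitrary: A)
  case 0
  then show ?case by simp
next
  case (Suc c A)
  then have "A \<noteq> {}" by auto
  define M where "M = Max A"
  have "M \<in> A"
    using Suc.prems \<open>A \<noteq> {}\<close> by (simp add: M_def)
  have new_max_iff: "(\<forall>y\<in>set g. y < a) \<longleftrightarrow> a = M"
    if "a \<in> A" and "g \<in> permutations_of_set (A - {a})" for a g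
  proof -
    have set_g: "set g = A - {a}"
      using that(2) by (simp add: permutations_of_set_def)
    show ?thesis
    proof
      assume "\<forall>y\<in>set g. y < a"
      then have "\<forall>y\<in>A. y \<le> a"
        using set_g by (metis Diff_iff order.strict_implies_order order_refl singletonD)
      then show "a = M"
        unfolding M_def using Suc.prems that(1) by (intro Max_eqI[symmetric]) auto
    next
      assume "a = M"
      then show "\<forall>y\<in>set g. y < a"
        using set_g Max_ge[OF Suc.prems] by (auto simp: M_def order.not_eq_order_implies_strict)
    qed
  qed
  have "(\<Sum>g\<in>permutations_of_set A. x ^ ltr_maxima g)
      = (\<Sum>a\<in>A. \<Sum>g\<in>permutations_of_set (A - {a}). x ^ ltr_maxima (g @ [a]))"
    using Suc.prems \<open>A \<noteq> {}\<close> by (rule sum_permutations_of_set_snoc)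
  also have "\<dots> = (\<Sum>a\<in>A. (if a = M then x else 1) * pochhammer x c)"
  proof (rule sum.cong)
    fix a assume "a \<in> A"
    then have "card (A - {a}) = c"
      using Suc.hyps(2) Suc.prems by simp
    then have IH: "(\<Sum>g\<in>permutations_of_set (A - {a}). x ^ ltr_maxima g) = pochhammer x c"
      using Suc.hyps(1)[of "A - {a}"] Suc.prems by simp
    have "(\<Sum>g\<in>permutations_of_set (A - {a}). x ^ ltr_maxima (g @ [a]))
        = (\<Sum>g\<in>permutations_of_set (A - {a}). (if a = M then x else 1) * x ^ ltr_maxima g)"
      by (rule sum.cong) (simp_all add: ltr_maxima_snoc new_max_iff[OF \<open>a \<in> A\<close>])
    also have "\<dots> = (if a = M then x else 1) * pochhammer x c"
      by (simp add: IH flip: sum_distrib_left)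
    finally show "(\<Sum>g\<in>permutations_of_set (A - {a}). x ^ ltr_maxima (g @ [a]))
        = (if a = M then x else 1) * pochhammer x c" .
  qed simp
  also have "\<dots> = (x + of_nat c) * pochhammer x c"
  proof -
    have "card (A - {M}) = c"
      using Suc.hyps(2) Suc.prems \<open>M \<in> A\<close> by simp
    then show ?thesis
      using sum.remove[OF Suc.prems \<open>M \<in> A\<close>, of "\<lambda>a. (if a = M then x else 1) * pochhammer x c"]
      by (simp add: distrib_right)
  qed
  also have "\<dots> = pochhammer x (card A)"
    by (simp flip: Suc.hyps(2) add: pochhammer_Suc mult.commute)
  finally show ?case .
qed

lemma bubble_preimage_eq_vimage:
  assumes "s \<in> permutations_of_set {1..n}"
  shows "bubble_preimage n s = bubble -` {s}"
  using assms by (auto simp: bubble_preimage_def)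

lemma prod_ratio_eq_pochhammer_div_fact:
  fixes x :: real
  shows "(\<Prod>j=1..n-1. (x + real n - real j - 1) / (real n - real j + 1))
       = pochhammer x (n - 1) / fact n"
proof -
  have "(\<Prod>j=1..n-1. (x + real n - real j - 1) / (real n - real j + 1))
      = (\<Prod>i<n-1. (x + real i) / (real i + 2))"
    by (rule prod.reindex_bij_witness[of _ "\<lambda>i. n - 1 - i" "\<lambda>j. n - 1 - j"])
      (auto simp: of_nat_diff algebra_simps)
  also have "\<dots> = (\<Prod>i<n-1. x + real i) / (\<Prod>i<n-1. real i + 2)"
    by (rule prod_dividef)
  also have "(\<Prod>i<n-1. x + real i) = pochhammer x (n - 1)"
    by (simp add: pochhammer_prod atLeast0LessThan)
  also have "(\<Prod>i<k. real i + 2) = fact (Suc k)" for k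
    by (induction k) (simp_all add: algebra_simps)
  then have "(\<Prod>i<n-1. real i + 2) = fact n"
    by (cases n) simp_all
  finally show ?thesis .
qed

theorem mainTheorem8:
  fixes n m :: nat
  assumes "n \<ge> 1" and "m \<ge> 1"
  shows "(1 / fact n) * (\<Sum>p\<in>permutations_of_set {1..n}.
            (real (card (bubble_preimage n (bubble p)))) ^ m)
         = (\<Prod>j=1..n-1. (2 ^ (m + 1) + real n - real j - 1) / (real n - real j + 1))"
proof -
  let ?P = "permutations_of_set {1..n}" and ?P' = "permutations_of_set {1..n-1}"
  have "Max {1..n} = n" and "{1..n} - {n} = {1..n-1}"
    using assms(1) by (auto intro: Max_eqI)
  then have image: "bubble ` ?P = (\<lambda>g. g @ [n]) ` ?P'"
    using bubble_image_permutations_of_set[of "{1..n}"] assms(1) by simp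
  have fiber: "real (card (bubble_preimage n (g @ [n]))) ^ Suc m = (2 ^ Suc m) ^ ltr_maxima g"
    if "g \<in> ?P'" for g
  proof -
    have "distinct g" and "\<forall>x\<in>set g. x < n" and "g @ [n] \<in> ?P"
      using that assms(1) by (auto simp: permutations_of_set_def)
    then have "card (bubble_preimage n (g @ [n])) = 2 ^ ltr_maxima g"
      by (simp add: bubble_preimage_eq_vimage card_bubble_vimage_snoc_max_eq)
    then show ?thesis
      by (simp flip: power_mult add: mult.commute)
  qed
  have "(\<Sum>p\<in>?P. real (card (bubble_preimage n (bubble p))) ^ m)
      = (\<Sum>s\<in>bubble ` ?P. real (card (bubble_preimage n s)) ^ Suc m)"
    unfolding bubble_preimage_def by (rule sum_card_fiber_power) simp
  also have "\<dots> = (\<Sum>g\<in>?P'. real (card (bubble_preimage n (g @ [n]))) ^ Suc m)"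
    unfolding image by (rule sum.reindex_cong[OF _ refl refl]) (simp add: inj_on_def)
  also have "\<dots> = (\<Sum>g\<in>?P'. (2 ^ Suc m) ^ ltr_maxima g)"
    by (rule sum.cong[OF refl fiber])
  also have "\<dots> = pochhammer (2 ^ Suc m) (n - 1)"
    by (subst sum_power_ltr_maxima) simp_all
  finally show ?thesis
    unfolding prod_ratio_eq_pochhammer_div_fact by simp
qed

end
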